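(* For any finite, simple, connected graph $G$ and any $n\ge 1$, $\gamma_P(G)\le\gamma_P(G\,\Box\,P_n)\le\gamma(G)$. In particular, $\gamma_P(G)\le\gamma_P(G\,\Box\,P_2)\le\min\{\gamma(G),Z(G)\}$, and if $\gamma_P(G)=\gamma(G)$ then $\gamma_P(G\,\Box\,P_n)=\gamma(G)$.
   Context: $P_n$ is the path of order $n$. The Cartesian product $G\,\Box\,H$ has vertex set $V(G)\times V(H)$, with $(g,h)$ adjacent to $(g',h')$ iff either $g=g'$ and $hh'\in E(H)$, or $h=h'$ and $gg'\in E(G)$. $\gamma(G)$ is the domination number. For $U\subseteq V$, $cl(U)$ is obtained by coloring $U$ black and repeatedly applying: if a black vertex has exactly one white neighbor, that neighbor becomes black. $U$ is a zero forcing set if $cl(U)=V$, and $Z(G)$ is the minimum size of a zero forcing set. $S$ is a power dominating set if $cl(N[S])=V$; $\gamma_P$ is the minimum size of a power dominating set. *)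

theory Defs
  imports Main
begin

definition simple_graph :: "'a set \<Rightarrow> ('a \<Rightarrow> 'a \<Rightarrow> bool) \<Rightarrow> bool" where
  "simple_graph V E \<longleftrightarrow> finite V \<and> (\<forall>x y. E x y \<longrightarrow> x \<in> V \<and> y \<in> V)
     \<and> (\<forall>x y. E x y \<longrightarrow> E y x) \<and> (\<forall>x. \<not> E x x)"

definition connected_graph :: "'a set \<Rightarrow> ('a \<Rightarrow> 'a \<Rightarrow> bool) \<Rightarrow> bool" where
  "connected_graph V E \<longleftrightarrow> V \<noteq> {} \<and>
     (\<forall>x\<in>V. \<forall>y\<in>V. (\<lambda>u v. u \<in> V \<and> v \<in> V \<and> E u v)\<^sup>*\<^sup>* x y)"

definition path_adj :: "nat \<Rightarrow> nat \<Rightarrow> bool" where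
  "path_adj i j \<longleftrightarrow> i = Suc j \<or> j = Suc i"

definition path_V :: "nat \<Rightarrow> nat set" where
  "path_V n = {0..<n}"

definition cart_V :: "'a set \<Rightarrow> 'b set \<Rightarrow> ('a \<times> 'b) set" where
  "cart_V V W = V \<times> W"

definition cart_E :: "('a \<Rightarrow> 'a \<Rightarrow> bool) \<Rightarrow> ('b \<Rightarrow> 'b \<Rightarrow> bool) \<Rightarrow> 'a \<times> 'b \<Rightarrow> 'a \<times> 'b \<Rightarrow> bool" where
  "cart_E E F p q \<longleftrightarrow> (fst p = fst q \<and> F (snd p) (snd q)) \<or> (snd p = snd q \<and> E (fst p) (fst q))"

definition nbrs :: "'a set \<Rightarrow> ('a \<Rightarrow> 'a \<Rightarrow> bool) \<Rightarrow> 'a \<Rightarrow> 'a set" where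
  "nbrs V E u = {w \<in> V. E u w}"

definition closed_nbhd :: "'a set \<Rightarrow> ('a \<Rightarrow> 'a \<Rightarrow> bool) \<Rightarrow> 'a set \<Rightarrow> 'a set" where
  "closed_nbhd V E S = S \<union> (\<Union>u\<in>S. nbrs V E u)"

text \<open>Closure under the color-change rule: a black vertex with exactly one white
  neighbour forces that neighbour to become black.\<close>
inductive_set cl :: "'a set \<Rightarrow> ('a \<Rightarrow> 'a \<Rightarrow> bool) \<Rightarrow> 'a set \<Rightarrow> 'a set"
  for V E U where
  base: "u \<in> U \<Longrightarrow> u \<in> V \<Longrightarrow> u \<in> cl V E U"
| force: "u \<in> cl V E U \<Longrightarrow> w \<in> nbrs V E u \<Longrightarrow>
          (\<forall>w'\<in>nbrs V E u. w' \<noteq> w \<longrightarrow> w' \<in> cl V E U) \<Longrightarrow> w \<in> cl V E U"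

definition zero_forcing_set :: "'a set \<Rightarrow> ('a \<Rightarrow> 'a \<Rightarrow> bool) \<Rightarrow> 'a set \<Rightarrow> bool" where
  "zero_forcing_set V E U \<longleftrightarrow> U \<subseteq> V \<and> cl V E U = V"

definition dominating_set :: "'a set \<Rightarrow> ('a \<Rightarrow> 'a \<Rightarrow> bool) \<Rightarrow> 'a set \<Rightarrow> bool" where
  "dominating_set V E S \<longleftrightarrow> S \<subseteq> V \<and> closed_nbhd V E S = V"

definition power_dominating_set :: "'a set \<Rightarrow> ('a \<Rightarrow> 'a \<Rightarrow> bool) \<Rightarrow> 'a set \<Rightarrow> bool" where
  "power_dominating_set V E S \<longleftrightarrow> S \<subseteq> V \<and> cl V E (closed_nbhd V E S) = V"

definition zero_forcing_number :: "'a set \<Rightarrow> ('a \<Rightarrow> 'a \<Rightarrow> bool) \<Rightarrow> nat" where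
  "zero_forcing_number V E = Min (card ` {U. zero_forcing_set V E U})"

definition domination_number :: "'a set \<Rightarrow> ('a \<Rightarrow> 'a \<Rightarrow> bool) \<Rightarrow> nat" where
  "domination_number V E = Min (card ` {S. dominating_set V E S})"

definition power_domination_number :: "'a set \<Rightarrow> ('a \<Rightarrow> 'a \<Rightarrow> bool) \<Rightarrow> nat" where
  "power_domination_number V E = Min (card ` {S. power_dominating_set V E S})"

end

theory Submission
  imports Defs
begin

text \<open>Projecting a power dominating set of \<open>G \<box> H\<close> onto \<open>G\<close> gives a power dominating set
  of \<open>G\<close>: a force \<open>(u,i) \<rightarrow> (w,i)\<close> along a \<open>G\<close>-edge projects to a force \<open>u \<rightarrow> w\<close> in \<open>G\<close>,
  while a force along an \<open>H\<close>-edge projects to a vertex that is already black.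
  For the upper bound, if \<open>D\<close> dominates \<open>G\<close> then \<open>N[D \<times> {0}]\<close> contains the bottom layer of
  \<open>G \<box> P\<^sub>n\<close>; once the layers up to \<open>k\<close> are black, each vertex of layer \<open>k\<close> has its only
  white neighbour directly above it, so the layers turn black one after another. If \<open>Z\<close> is a zero forcing set of \<open>G\<close>, then
  \<open>N[Z \<times> {0}]\<close> in \<open>G \<box> P\<^sub>2\<close> contains \<open>Z \<times> {0,1}\<close>, and the forces of \<open>G\<close> can be replayed in
  all layers simultaneously.\<close>

lemma cl_subset: "cl V E U \<subseteq> V"
proof
  fix x assume "x \<in> cl V E U"
  then show "x \<in> V" by cases (simp_all add: nbrs_def)
qed

lemma subset_cl: "U \<subseteq> V \<Longrightarrow> U \<subseteq> cl V E U"
  by (auto intro: cl.base)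

lemma cl_mono:
  assumes "A \<subseteq> B"
  shows "cl V E A \<subseteq> cl V E B"
proof
  fix x assume "x \<in> cl V E A"
  then show "x \<in> cl V E B"
  proof induction
    case (base u)
    then show ?case using assms by (blast intro: cl.base)
  next
    case (force u w)
    show ?case
      by (rule cl.force[OF force.IH(1) force.hyps(2)]) (use force.IH(2) in blast)
  qed
qed

lemma cl_forceI:
  assumes "u \<in> cl V E U" and "w \<in> nbrs V E u"
    and "\<And>w'. w' \<in> nbrs V E u \<Longrightarrow> w' \<noteq> w \<Longrightarrow> w' \<in> cl V E U"
  shows "w \<in> cl V E U"
  by (rule cl.force[OF assms(1,2)]) (use assms(3) in blast)

lemma zero_forcing_setI: "U \<subseteq> V \<Longrightarrow> V \<subseteq> cl V E U \<Longrightarrow> zero_forcing_set V E U"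
  unfolding zero_forcing_set_def by (intro conjI subset_antisym cl_subset)

lemma zero_forcing_set_self: "zero_forcing_set V E V"
  by (intro zero_forcing_setI subset_cl order.refl)

lemma closed_nbhd_subset: "S \<subseteq> V \<Longrightarrow> closed_nbhd V E S \<subseteq> V"
  by (auto simp: closed_nbhd_def nbrs_def)

lemma power_dominating_set_iff_zero_forcing_set:
  "power_dominating_set V E S \<longleftrightarrow> S \<subseteq> V \<and> zero_forcing_set V E (closed_nbhd V E S)"
  using closed_nbhd_subset[of S V E]
  by (auto simp: power_dominating_set_def zero_forcing_set_def)

lemma power_dominating_setI:
  assumes "S \<subseteq> V" and "zero_forcing_set V E U" and "U \<subseteq> closed_nbhd V E S"
  shows "power_dominating_set V E S"
proof -
  have "V = cl V E U" using assms(2) by (simp add: zero_forcing_set_def)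
  also have "\<dots> \<subseteq> cl V E (closed_nbhd V E S)" using assms(3) by (rule cl_mono)
  finally have "zero_forcing_set V E (closed_nbhd V E S)"
    by (rule zero_forcing_setI[OF closed_nbhd_subset[OF assms(1)]])
  then show ?thesis using assms(1) by (simp add: power_dominating_set_iff_zero_forcing_set)
qed

lemma power_dominating_set_self: "power_dominating_set V E V"
  by (rule power_dominating_setI[OF _ zero_forcing_set_self]) (auto simp: closed_nbhd_def)

lemma dominating_set_self: "dominating_set V E V"
  by (auto simp: dominating_set_def closed_nbhd_def nbrs_def)

lemma finite_Collect_bounded_subsets:
  "finite V \<Longrightarrow> (\<And>S. P S \<Longrightarrow> S \<subseteq> V) \<Longrightarrow> finite {S. P S}"
  by (rule finite_subset[OF _ finite_Collect_subsets]) auto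

lemma Min_card_le:
  assumes "finite V" and "\<And>S. P S \<Longrightarrow> S \<subseteq> V" and "P S"
  shows "Min (card ` {S. P S}) \<le> card S"
  using finite_Collect_bounded_subsets[OF assms(1,2)] assms(3) by simp

lemma ex_card_eq_Min_card:
  assumes "finite V" and "\<And>S. P S \<Longrightarrow> S \<subseteq> V" and "P T"
  shows "\<exists>S. P S \<and> card S = Min (card ` {S. P S})"
proof -
  have "Min (card ` {S. P S}) \<in> card ` {S. P S}"
    using finite_Collect_bounded_subsets[OF assms(1,2)] assms(3) by (intro Min_in) auto
  then show ?thesis by auto
qed

lemma power_domination_number_le:
  "finite V \<Longrightarrow> power_dominating_set V E S \<Longrightarrow> power_domination_number V E \<le> card S"
  unfolding power_domination_number_def
  by (rule Min_card_le) (auto simp: power_dominating_set_def)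

lemma obtain_min_power_dominating_set:
  assumes "finite V"
  obtains S where "power_dominating_set V E S" "card S = power_domination_number V E"
proof -
  have "\<And>S. power_dominating_set V E S \<Longrightarrow> S \<subseteq> V" by (simp add: power_dominating_set_def)
  from ex_card_eq_Min_card[of V "power_dominating_set V E", OF assms this power_dominating_set_self]
  show thesis
    using that unfolding power_domination_number_def by blast
qed

lemma obtain_min_dominating_set:
  assumes "finite V"
  obtains D where "dominating_set V E D" "card D = domination_number V E"
proof -
  have "\<And>S. dominating_set V E S \<Longrightarrow> S \<subseteq> V" by (simp add: dominating_set_def)
  from ex_card_eq_Min_card[of V "dominating_set V E", OF assms this dominating_set_self]
  show thesis
    using that unfolding domination_number_def by blast
qed

lemma obtain_min_zero_forcing_set:
  assumes "finite V"
  obtains Z where "zero_forcing_set V E Z" "card Z = zero_forcing_number V E"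
proof -
  have "\<And>S. zero_forcing_set V E S \<Longrightarrow> S \<subseteq> V" by (simp add: zero_forcing_set_def)
  from ex_card_eq_Min_card[of V "zero_forcing_set V E", OF assms this zero_forcing_set_self]
  show thesis
    using that unfolding zero_forcing_number_def by blast
qed

lemma nbrs_cart:
  "(x, j) \<in> nbrs (V \<times> W) (cart_E E F) (u, i) \<longleftrightarrow>
     x \<in> V \<and> j \<in> W \<and> ((x = u \<and> F i j) \<or> (j = i \<and> E u x))"
  by (auto simp: nbrs_def cart_E_def)

lemma fst_closed_nbhd_cart_subset:
  "fst ` closed_nbhd (V \<times> W) (cart_E E F) S \<subseteq> closed_nbhd V E (fst ` S)"
proof (rule image_subsetI)
  fix p assume "p \<in> closed_nbhd (V \<times> W) (cart_E E F) S"
  then consider "p \<in> S" | q where "q \<in> S" "p \<in> V \<times> W" "cart_E E F q p"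
    by (auto simp: closed_nbhd_def nbrs_def)
  then show "fst p \<in> closed_nbhd V E (fst ` S)"
  proof cases
    case 1
    then show ?thesis by (simp add: closed_nbhd_def)
  next
    case 2
    then have "fst p = fst q \<or> (fst p \<in> V \<and> E (fst q) (fst p))"
      by (auto simp: cart_E_def)
    then show ?thesis using 2(1) by (force simp: closed_nbhd_def nbrs_def)
  qed
qed

lemma fst_mem_cl_cart:
  assumes "p \<in> cl (V \<times> W) (cart_E E F) U"
  shows "fst p \<in> cl V E (fst ` U)"
  using assms
proof induction
  case (base p)
  then show ?case by (auto intro: cl.base)
next
  case (force p q)
  obtain u i where p: "p = (u, i)" by fastforce
  obtain w j where q: "q = (w, j)" by fastforce
  show ?case
  proof (cases "w = u")
    case True
    then show ?thesis using force.IH(1) p q by simp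
  next
    case False
    moreover have "(w, j) \<in> nbrs (V \<times> W) (cart_E E F) (u, i)"
      using force.hyps(2) p q by simp
    ultimately have "j = i" "w \<in> V" "E u w"
      by (auto simp: nbrs_cart)
    then have w: "w \<in> nbrs V E u" by (simp add: nbrs_def)
    have u: "u \<in> cl V E (fst ` U)" using force.IH(1) p by simp
    have "w' \<in> cl V E (fst ` U)" if "w' \<in> nbrs V E u" "w' \<noteq> w" for w'
    proof -
      have "p \<in> V \<times> W" using cl_subset force.hyps(1) by (rule subsetD)
      then have "(w', i) \<in> nbrs (V \<times> W) (cart_E E F) p" "(w', i) \<noteq> q"
        using that by (auto simp: p q nbrs_def cart_E_def)
      then have "fst (w', i) \<in> cl V E (fst ` U)" using force.IH(2) by blast
      then show ?thesis by simp
    qed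
    then have "w \<in> cl V E (fst ` U)" by (rule cl_forceI[OF u w])
    then show ?thesis using q by simp
  qed
qed

lemma power_dominating_set_fst:
  assumes "W \<noteq> {}" and "power_dominating_set (V \<times> W) (cart_E E F) S"
  shows "power_dominating_set V E (fst ` S)"
proof -
  have fst_S: "fst ` S \<subseteq> V" using assms(2) by (auto simp: power_dominating_set_def)
  have "V = fst ` cl (V \<times> W) (cart_E E F) (closed_nbhd (V \<times> W) (cart_E E F) S)"
    using assms by (simp add: power_dominating_set_def)
  also have "\<dots> \<subseteq> cl V E (fst ` closed_nbhd (V \<times> W) (cart_E E F) S)"
    using fst_mem_cl_cart by blast
  also have "\<dots> \<subseteq> cl V E (closed_nbhd V E (fst ` S))"
    by (rule cl_mono[OF fst_closed_nbhd_cart_subset])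
  finally have "zero_forcing_set V E (closed_nbhd V E (fst ` S))"
    by (intro zero_forcing_setI closed_nbhd_subset fst_S)
  then show ?thesis using fst_S by (simp add: power_dominating_set_iff_zero_forcing_set)
qed

lemma power_domination_number_le_cart:
  assumes "finite V" and "finite W" and "W \<noteq> {}"
  shows "power_domination_number V E \<le> power_domination_number (cart_V V W) (cart_E E F)"
proof -
  have fin: "finite (V \<times> W)" using assms by simp
  obtain S where S: "power_dominating_set (V \<times> W) (cart_E E F) S"
      "card S = power_domination_number (V \<times> W) (cart_E E F)"
    using obtain_min_power_dominating_set[OF fin] by blast
  have "power_domination_number V E \<le> card (fst ` S)"
    using power_dominating_set_fst[OF assms(3) S(1)]
    by (rule power_domination_number_le[OF assms(1)])
  also have "\<dots> \<le> card S"
    using S(1) fin by (metis card_image_le finite_subset power_dominating_set_def)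
  finally show ?thesis using S(2) by (simp add: cart_V_def)
qed

lemma zero_forcing_set_bottom_layer:
  assumes "0 < n"
  shows "zero_forcing_set (V \<times> path_V n) (cart_E E path_adj) (V \<times> {0})"
proof -
  define C where "C = cl (V \<times> path_V n) (cart_E E path_adj) (V \<times> {0})"
  have "(v, k) \<in> C" if "k < n" "v \<in> V" for k v
    using that
  proof (induction k arbitrary: v rule: less_induct)
    case (less k)
    show ?case
    proof (cases k)
      case 0
      then show ?thesis using less.prems assms
        by (auto simp: C_def path_V_def intro: cl.base)
    next
      case (Suc m)
      have "(v, m) \<in> C" using less Suc by simp
      moreover have "(v, k) \<in> nbrs (V \<times> path_V n) (cart_E E path_adj) (v, m)"
        using less.prems Suc by (simp add: nbrs_cart path_V_def path_adj_def)
      moreover have "q \<in> C"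
        if "q \<in> nbrs (V \<times> path_V n) (cart_E E path_adj) (v, m)" "q \<noteq> (v, k)" for q
      proof -
        obtain x j where q: "q = (x, j)" by fastforce
        have "j < k" "j < n" "x \<in> V"
          using that Suc by (auto simp: q nbrs_cart path_V_def path_adj_def)
        then show ?thesis using less.IH q by simp
      qed
      ultimately show ?thesis unfolding C_def by (rule cl_forceI)
    qed
  qed
  then have "V \<times> path_V n \<subseteq> C" by (auto simp: path_V_def)
  then show ?thesis
    unfolding C_def using assms by (intro zero_forcing_setI) (auto simp: path_V_def)
qed

lemma zero_forcing_set_cart:
  assumes "zero_forcing_set V E Z"
  shows "zero_forcing_set (V \<times> W) (cart_E E F) (Z \<times> W)"
proof -
  define C where "C = cl (V \<times> W) (cart_E E F) (Z \<times> W)"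
  have "(v, i) \<in> C" if "v \<in> cl V E Z" "i \<in> W" for v i
    using that
  proof (induction arbitrary: i)
    case (base u)
    then show ?case by (auto simp: C_def intro: cl.base)
  next
    case (force u w)
    have "(u, i) \<in> C" using force.IH(1) force.prems by simp
    moreover have "(w, i) \<in> nbrs (V \<times> W) (cart_E E F) (u, i)"
      using force.hyps(2) force.prems by (simp add: nbrs_def cart_E_def)
    moreover have "q \<in> C"
      if "q \<in> nbrs (V \<times> W) (cart_E E F) (u, i)" "q \<noteq> (w, i)" for q
    proof -
      obtain x j where q: "q = (x, j)" by fastforce
      then have j: "j \<in> W" and "x = u \<or> (j = i \<and> x \<in> nbrs V E u \<and> x \<noteq> w)"
        using that by (auto simp: nbrs_def cart_E_def)
      from this(2) show ?thesis
      proof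
        assume "x = u"
        then show ?thesis using force.IH(1)[OF j] q by simp
      next
        assume "j = i \<and> x \<in> nbrs V E u \<and> x \<noteq> w"
        then show ?thesis using force.IH(2) force.prems q by blast
      qed
    qed
    ultimately show ?case unfolding C_def by (rule cl_forceI)
  qed
  then have "V \<times> W \<subseteq> C" using assms by (auto simp: zero_forcing_set_def)
  then show ?thesis
    unfolding C_def using assms by (intro zero_forcing_setI) (auto simp: zero_forcing_set_def)
qed

lemma closed_nbhd_cart_dominating_layer:
  assumes "dominating_set V E D" and "i \<in> W"
  shows "V \<times> {i} \<subseteq> closed_nbhd (V \<times> W) (cart_E E F) (D \<times> {i})"
proof
  fix p assume "p \<in> V \<times> {i}"
  then obtain v where p: "p = (v, i)" "v \<in> closed_nbhd V E D"
    using assms(1) by (auto simp: dominating_set_def)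
  then consider "v \<in> D" | u where "u \<in> D" "v \<in> nbrs V E u"
    by (auto simp: closed_nbhd_def)
  then show "p \<in> closed_nbhd (V \<times> W) (cart_E E F) (D \<times> {i})"
  proof cases
    case 1
    then show ?thesis using p by (simp add: closed_nbhd_def)
  next
    case 2
    then have "p \<in> nbrs (V \<times> W) (cart_E E F) (u, i)"
      using p assms(2) by (simp add: nbrs_def cart_E_def)
    then show ?thesis using 2 by (auto simp: closed_nbhd_def)
  qed
qed

lemma power_domination_number_cart_path_le_domination_number:
  assumes "finite V" and "0 < n"
  shows "power_domination_number (cart_V V (path_V n)) (cart_E E path_adj) \<le> domination_number V E"
proof -
  obtain D where D: "dominating_set V E D" "card D = domination_number V E"
    using obtain_min_dominating_set[OF assms(1)] by blast
  have "power_dominating_set (V \<times> path_V n) (cart_E E path_adj) (D \<times> {0})"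
  proof (rule power_dominating_setI[OF _ zero_forcing_set_bottom_layer[OF assms(2)]])
    show "D \<times> {0} \<subseteq> V \<times> path_V n"
      using D(1) assms(2) by (auto simp: dominating_set_def path_V_def)
    show "V \<times> {0} \<subseteq> closed_nbhd (V \<times> path_V n) (cart_E E path_adj) (D \<times> {0})"
      using D(1) assms(2) by (intro closed_nbhd_cart_dominating_layer) (auto simp: path_V_def)
  qed
  then have "power_domination_number (V \<times> path_V n) (cart_E E path_adj) \<le> card (D \<times> {0::nat})"
    using assms(1) by (intro power_domination_number_le) (auto simp: path_V_def)
  then show ?thesis using D(2) by (simp add: cart_V_def card_cartesian_product)
qed

lemma power_domination_number_cart_path2_le_zero_forcing_number:
  assumes "finite V"
  shows "power_domination_number (cart_V V (path_V 2)) (cart_E E path_adj) \<le> zero_forcing_number V E"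
proof -
  obtain Z where Z: "zero_forcing_set V E Z" "card Z = zero_forcing_number V E"
    using obtain_min_zero_forcing_set[OF assms] by blast
  have "power_dominating_set (V \<times> path_V 2) (cart_E E path_adj) (Z \<times> {0})"
  proof (rule power_dominating_setI[OF _ zero_forcing_set_cart[OF Z(1)]])
    show "Z \<times> {0} \<subseteq> V \<times> path_V 2"
      using Z(1) by (auto simp: zero_forcing_set_def path_V_def)
    have "(z, 1) \<in> nbrs (V \<times> path_V 2) (cart_E E path_adj) (z, 0)" if "z \<in> Z" for z
      using that Z(1) by (auto simp: nbrs_cart zero_forcing_set_def path_V_def path_adj_def)
    then show "Z \<times> path_V 2 \<subseteq> closed_nbhd (V \<times> path_V 2) (cart_E E path_adj) (Z \<times> {0})"
      by (auto simp: closed_nbhd_def path_V_def less_2_cases_iff)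
  qed
  then have "power_domination_number (V \<times> path_V 2) (cart_E E path_adj) \<le> card (Z \<times> {0::nat})"
    using assms by (intro power_domination_number_le) (auto simp: path_V_def)
  then show ?thesis using Z(2) by (simp add: cart_V_def card_cartesian_product)
qed

theorem mainTheorem11:
  fixes V :: "'a set" and E :: "'a \<Rightarrow> 'a \<Rightarrow> bool"
  assumes "simple_graph V E" and "connected_graph V E"
  shows "(\<forall>n\<ge>1.
            power_domination_number V E
              \<le> power_domination_number (cart_V V (path_V n)) (cart_E E path_adj)
          \<and> power_domination_number (cart_V V (path_V n)) (cart_E E path_adj)
              \<le> domination_number V E)
       \<and> (power_domination_number V E
              \<le> power_domination_number (cart_V V (path_V 2)) (cart_E E path_adj)
          \<and> power_domination_number (cart_V V (path_V 2)) (cart_E E path_adj)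
              \<le> min (domination_number V E) (zero_forcing_number V E))
       \<and> (power_domination_number V E = domination_number V E \<longrightarrow>
          (\<forall>n\<ge>1. power_domination_number (cart_V V (path_V n)) (cart_E E path_adj)
                   = domination_number V E))"
proof -
  have fin: "finite V" using assms(1) by (simp add: simple_graph_def)
  have lower: "power_domination_number V E
                 \<le> power_domination_number (cart_V V (path_V n)) (cart_E E path_adj)"
    if "n \<ge> 1" for n
    using that by (intro power_domination_number_le_cart[OF fin]) (auto simp: path_V_def)
  have upper: "power_domination_number (cart_V V (path_V n)) (cart_E E path_adj)
                 \<le> domination_number V E" if "n \<ge> 1" for n
    using that by (intro power_domination_number_cart_path_le_domination_number[OF fin]) simp
  show ?thesis
    using lower upper power_domination_number_cart_path2_le_zero_forcing_number[OF fin, of E]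
    by (auto intro: order.antisym)
qed

end
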